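(* Let $(X,S)$ be an $S$-metric space, $r\ge0$, and let $\{x_n\}$ be an $r$-statistically convergent sequence in $X$. Then $st\text{-}LIM^r x_n$ is a closed set in the topology induced by $S$.
   Context: An $S$-metric on a nonempty set $X$ is a function $S:X^3\to[0,\infty)$ such that for all $x,y,z,a\in X$: $S(x,y,z)=0$ if and only if $x=y=z$, and $S(x,y,z)\le S(x,x,a)+S(y,y,a)+S(z,z,a)$. The open balls $B_S(x,r)=\{y\in X: S(y,y,x)<r\}$ form a base of the topology induced by $S$. For $B\subset\mathbb N$ the natural density is $\delta(B)=\lim_{n\to\infty}\frac{|\{k\in B:k\le n\}|}{n}$ when the limit exists. For $r\ge0$, $\{x_n\}$ is $r$-statistically convergent to $x$ if for every $\varepsilon>0$, $\delta(\{n\in\mathbb N: S(x_n,x_n,x)\ge r+\varepsilon\})=0$; $st\text{-}LIM^r x_n$ denotes the set of all such $x\in X$, and $\{x_n\}$ is called $r$-statistically convergent if this set is nonempty. *)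

theory Defs
  imports "HOL-Analysis.Analysis"
begin

definition S_metric :: "'a set \<Rightarrow> ('a \<Rightarrow> 'a \<Rightarrow> 'a \<Rightarrow> real) \<Rightarrow> bool" where
  "S_metric X S \<longleftrightarrow> X \<noteq> {} \<and>
     (\<forall>x\<in>X. \<forall>y\<in>X. \<forall>z\<in>X. S x y z \<ge> 0) \<and>
     (\<forall>x\<in>X. \<forall>y\<in>X. \<forall>z\<in>X. S x y z = 0 \<longleftrightarrow> x = y \<and> y = z) \<and>
     (\<forall>x\<in>X. \<forall>y\<in>X. \<forall>z\<in>X. \<forall>a\<in>X. S x y z \<le> S x x a + S y y a + S z z a)"

definition S_ball :: "'a set \<Rightarrow> ('a \<Rightarrow> 'a \<Rightarrow> 'a \<Rightarrow> real) \<Rightarrow> 'a \<Rightarrow> real \<Rightarrow> 'a set" where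
  "S_ball X S x r = {y \<in> X. S y y x < r}"

definition S_topology :: "'a set \<Rightarrow> ('a \<Rightarrow> 'a \<Rightarrow> 'a \<Rightarrow> real) \<Rightarrow> 'a topology" where
  "S_topology X S = topology (\<lambda>U. U \<subseteq> X \<and> (\<forall>x\<in>U. \<exists>r>0. S_ball X S x r \<subseteq> U))"

definition density_zero :: "nat set \<Rightarrow> bool" where
  "density_zero B \<longleftrightarrow>
     (\<lambda>n. real (card {k \<in> B. 1 \<le> k \<and> k \<le> n}) / real n) \<longlonglongrightarrow> 0"

definition st_LIM_r ::
  "'a set \<Rightarrow> ('a \<Rightarrow> 'a \<Rightarrow> 'a \<Rightarrow> real) \<Rightarrow> real \<Rightarrow> (nat \<Rightarrow> 'a) \<Rightarrow> 'a set" where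
  "st_LIM_r X S r xs = {x \<in> X. \<forall>\<epsilon>>0.
      density_zero {n. 1 \<le> n \<and> S (xs n) (xs n) x \<ge> r + \<epsilon>}}"

end

theory Submission
  imports Defs
begin

text \<open>
  If \<open>y\<close> is an \<open>r\<close>-statistical limit, then by the (symmetrised) triangle inequality
  every \<open>x\<close> is an \<open>(r + 2 S(y,y,x))\<close>-statistical limit, and the limit sets increase with
  the radius. So if \<open>x\<close> is not an \<open>r\<close>-limit, witnessed by some \<open>\<epsilon>\<close>, no point of the
  ball \<open>B(x, \<epsilon>/4)\<close> is an \<open>r\<close>-limit: the complement of the limit set is open.
\<close>

lemma S_metric_self_zero:
  assumes "S_metric X S" "x \<in> X"
  shows "S x x x = 0"
  using assms unfolding S_metric_def by blast

lemma S_metric_triangle: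
  assumes "S_metric X S" "x \<in> X" "y \<in> X" "z \<in> X" "a \<in> X"
  shows "S x y z \<le> S x x a + S y y a + S z z a"
proof -
  have "\<forall>x\<in>X. \<forall>y\<in>X. \<forall>z\<in>X. \<forall>a\<in>X. S x y z \<le> S x x a + S y y a + S z z a"
    using assms(1) unfolding S_metric_def by (elim conjE)
  then show ?thesis using assms(2-5) by blast
qed

lemma S_metric_sym:
  assumes "S_metric X S" "x \<in> X" "y \<in> X"
  shows "S x x y = S y y x"
proof -
  have "S x x y \<le> S x x x + S x x x + S y y x"
    using S_metric_triangle[OF assms(1) assms(2,2,3,2)] .
  moreover have "S y y x \<le> S y y y + S y y y + S x x y"
    using S_metric_triangle[OF assms(1) assms(3,3,2,3)] .
  ultimately show ?thesis
    using S_metric_self_zero[OF assms(1)] assms(2,3) by simp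
qed

lemma S_metric_triangle_sym:
  assumes "S_metric X S" "x \<in> X" "y \<in> X" "z \<in> X"
  shows "S z z x \<le> 2 * S y y x + S z z y"
proof -
  have "S x x z \<le> S x x y + S x x y + S z z y"
    using S_metric_triangle[OF assms(1) assms(2,2,4,3)] .
  then show ?thesis
    using S_metric_sym[OF assms(1)] assms(2-4) by simp
qed

lemma istopology_S_open:
  "istopology (\<lambda>U. U \<subseteq> X \<and> (\<forall>x\<in>U. \<exists>r>0. S_ball X S x r \<subseteq> U))"
  unfolding istopology_def
proof (rule conjI; intro allI impI)
  fix A B
  assume A: "A \<subseteq> X \<and> (\<forall>x\<in>A. \<exists>r>0. S_ball X S x r \<subseteq> A)"
    and B: "B \<subseteq> X \<and> (\<forall>x\<in>B. \<exists>r>0. S_ball X S x r \<subseteq> B)"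
  show "A \<inter> B \<subseteq> X \<and> (\<forall>x\<in>A \<inter> B. \<exists>r>0. S_ball X S x r \<subseteq> A \<inter> B)"
  proof (intro conjI ballI)
    show "A \<inter> B \<subseteq> X" using A by blast
    fix x assume "x \<in> A \<inter> B"
    then obtain r1 r2 where "r1 > 0" "S_ball X S x r1 \<subseteq> A" "r2 > 0" "S_ball X S x r2 \<subseteq> B"
      using A B by blast
    then show "\<exists>r>0. S_ball X S x r \<subseteq> A \<inter> B"
      by (intro exI[of _ "min r1 r2"]) (auto simp: S_ball_def)
  qed
next
  fix K
  assume K: "\<forall>U\<in>K. U \<subseteq> X \<and> (\<forall>x\<in>U. \<exists>r>0. S_ball X S x r \<subseteq> U)"
  show "\<Union>K \<subseteq> X \<and> (\<forall>x\<in>\<Union>K. \<exists>r>0. S_ball X S x r \<subseteq> \<Union>K)"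
  proof (intro conjI ballI)
    show "\<Union>K \<subseteq> X" using K by blast
    fix x assume "x \<in> \<Union>K"
    then obtain U r where "U \<in> K" "r > 0" "S_ball X S x r \<subseteq> U" using K by blast
    then show "\<exists>r>0. S_ball X S x r \<subseteq> \<Union>K" by blast
  qed
qed

lemma openin_S_topology:
  "openin (S_topology X S) U \<longleftrightarrow> U \<subseteq> X \<and> (\<forall>x\<in>U. \<exists>r>0. S_ball X S x r \<subseteq> U)"
  unfolding S_topology_def topology_inverse'[OF istopology_S_open] ..

lemma topspace_S_topology: "topspace (S_topology X S) = X"
proof (rule subset_antisym)
  show "topspace (S_topology X S) \<subseteq> X"
    using openin_topspace[of "S_topology X S"] unfolding openin_S_topology by blast
  have "openin (S_topology X S) X"
    unfolding openin_S_topology by (auto simp: S_ball_def intro: exI[of _ 1])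
  then show "X \<subseteq> topspace (S_topology X S)"
    by (rule openin_subset)
qed

lemma closedin_S_topology:
  "closedin (S_topology X S) A \<longleftrightarrow> A \<subseteq> X \<and> (\<forall>x\<in>X - A. \<exists>r>0. S_ball X S x r \<inter> A = {})"
proof -
  have "S_ball X S x r \<subseteq> X - A \<longleftrightarrow> S_ball X S x r \<inter> A = {}" for x r
    by (auto simp: S_ball_def)
  then show ?thesis
    unfolding closedin_def topspace_S_topology openin_S_topology by blast
qed

lemma density_zero_subset:
  assumes "density_zero B" "A \<subseteq> B"
  shows "density_zero A"
  unfolding density_zero_def
proof (rule tendsto_sandwich[OF _ _ tendsto_const])
  show "\<forall>\<^sub>F n in sequentially. 0 \<le> real (card {k \<in> A. 1 \<le> k \<and> k \<le> n}) / real n"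
    by simp
  have "card {k \<in> A. 1 \<le> k \<and> k \<le> n} \<le> card {k \<in> B. 1 \<le> k \<and> k \<le> n}" for n
    by (rule card_mono) (use assms(2) in auto)
  then show "\<forall>\<^sub>F n in sequentially. real (card {k \<in> A. 1 \<le> k \<and> k \<le> n}) / real n
      \<le> real (card {k \<in> B. 1 \<le> k \<and> k \<le> n}) / real n"
    by (intro always_eventually allI divide_right_mono) simp_all
  show "(\<lambda>n. real (card {k \<in> B. 1 \<le> k \<and> k \<le> n}) / real n) \<longlonglongrightarrow> 0"
    using assms(1) unfolding density_zero_def .
qed

lemma st_LIM_r_mono:
  assumes "r \<le> r'"
  shows "st_LIM_r X S r xs \<subseteq> st_LIM_r X S r' xs"
proof
  fix x
  assume x: "x \<in> st_LIM_r X S r xs"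
  have "density_zero {n. 1 \<le> n \<and> r' + \<epsilon> \<le> S (xs n) (xs n) x}" if "\<epsilon> > 0" for \<epsilon>
  proof (rule density_zero_subset)
    show "density_zero {n. 1 \<le> n \<and> r + \<epsilon> \<le> S (xs n) (xs n) x}"
      using x that unfolding st_LIM_r_def by blast
    show "{n. 1 \<le> n \<and> r' + \<epsilon> \<le> S (xs n) (xs n) x}
        \<subseteq> {n. 1 \<le> n \<and> r + \<epsilon> \<le> S (xs n) (xs n) x}"
      using assms by auto
  qed
  with x show "x \<in> st_LIM_r X S r' xs"
    unfolding st_LIM_r_def by blast
qed

lemma st_LIM_r_shift:
  assumes S: "S_metric X S" and xs: "\<forall>n. xs n \<in> X"
    and y: "y \<in> st_LIM_r X S r xs" and x: "x \<in> X"
  shows "x \<in> st_LIM_r X S (r + 2 * S y y x) xs"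
  unfolding st_LIM_r_def
proof (intro CollectI conjI allI impI)
  show "x \<in> X" by (rule x)
  fix \<epsilon> :: real
  assume "\<epsilon> > 0"
  with y have dz: "density_zero {n. 1 \<le> n \<and> r + \<epsilon> \<le> S (xs n) (xs n) y}"
    unfolding st_LIM_r_def by blast
  have "y \<in> X"
    using y unfolding st_LIM_r_def by blast
  have bound: "S (xs n) (xs n) x \<le> 2 * S y y x + S (xs n) (xs n) y" for n
    by (rule S_metric_triangle_sym[OF S x \<open>y \<in> X\<close> xs[rule_format]])
  have "{n. 1 \<le> n \<and> r + 2 * S y y x + \<epsilon> \<le> S (xs n) (xs n) x}
      \<subseteq> {n. 1 \<le> n \<and> r + \<epsilon> \<le> S (xs n) (xs n) y}"
  proof
    fix n
    assume "n \<in> {n. 1 \<le> n \<and> r + 2 * S y y x + \<epsilon> \<le> S (xs n) (xs n) x}"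
    with bound[of n] show "n \<in> {n. 1 \<le> n \<and> r + \<epsilon> \<le> S (xs n) (xs n) y}"
      by simp
  qed
  with dz show "density_zero {n. 1 \<le> n \<and> r + 2 * S y y x + \<epsilon> \<le> S (xs n) (xs n) x}"
    by (rule density_zero_subset)
qed

lemma closedin_st_LIM_r:
  assumes S: "S_metric X S" and xs: "\<forall>n. xs n \<in> X"
  shows "closedin (S_topology X S) (st_LIM_r X S r xs)"
  unfolding closedin_S_topology
proof (intro conjI ballI)
  show "st_LIM_r X S r xs \<subseteq> X"
    unfolding st_LIM_r_def by blast
  fix x
  assume x: "x \<in> X - st_LIM_r X S r xs"
  then obtain \<epsilon> where "\<epsilon> > 0"
    and not_dz: "\<not> density_zero {n. 1 \<le> n \<and> r + \<epsilon> \<le> S (xs n) (xs n) x}"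
    unfolding st_LIM_r_def by blast
  have "y \<notin> st_LIM_r X S r xs" if "y \<in> S_ball X S x (\<epsilon> / 4)" for y
  proof
    assume "y \<in> st_LIM_r X S r xs"
    then have "x \<in> st_LIM_r X S (r + 2 * S y y x) xs"
      using st_LIM_r_shift[OF S xs] x by blast
    moreover have "r + 2 * S y y x \<le> r + \<epsilon> / 2"
      using that by (simp add: S_ball_def)
    ultimately have "x \<in> st_LIM_r X S (r + \<epsilon> / 2) xs"
      by (rule subsetD[OF st_LIM_r_mono, rotated])
    then have "density_zero {n. 1 \<le> n \<and> r + \<epsilon> / 2 + \<epsilon> / 2 \<le> S (xs n) (xs n) x}"
      unfolding st_LIM_r_def using half_gt_zero[OF \<open>\<epsilon> > 0\<close>] by blast
    with not_dz show False
      by (simp add: add.commute)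
  qed
  then have "S_ball X S x (\<epsilon> / 4) \<inter> st_LIM_r X S r xs = {}"
    by blast
  with \<open>\<epsilon> > 0\<close> show "\<exists>\<delta>>0. S_ball X S x \<delta> \<inter> st_LIM_r X S r xs = {}"
    by (intro exI[of _ "\<epsilon> / 4"]) simp
qed

theorem corollary4p1:
  fixes X :: "'a set" and S :: "'a \<Rightarrow> 'a \<Rightarrow> 'a \<Rightarrow> real"
    and r :: real and xs :: "nat \<Rightarrow> 'a"
  assumes "S_metric X S"
    and "r \<ge> 0"
    and "\<forall>n. xs n \<in> X"
    and "st_LIM_r X S r xs \<noteq> {}"
  shows "closedin (S_topology X S) (st_LIM_r X S r xs)"
  using closedin_st_LIM_r[OF assms(1,3)] .

end
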